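(* Consider decorated ideal hyperbolic triangles, parametrized by their generalized edge lengths $(l_1,l_2,l_3)\in\mathbb{R}^3$, with generalized angles $\theta_1,\theta_2,\theta_3$ ($\theta_i$ opposite the edge of length $l_i$), and set $x_i=\frac12(\theta_j+\theta_k-\theta_i)$ for $\{i,j,k\}=\{1,2,3\}$. Then the differential $1$-form $\omega=\sum_{i=1}^3 x_i\,dl_i$ is closed on $\mathbb{R}^3$, its integral $W(l)=\int_0^l\omega$ is a smooth strictly concave function on $\mathbb{R}^3$ (with negative definite Hessian), and $\partial W/\partial l_i=x_i$.
   Context: A decorated ideal triangle is an ideal hyperbolic triangle with a horodisk chosen at each of its three ideal vertices. The generalized angle $\theta_i$ at a vertex is twice the length of the arc of the chosen horocycle lying inside the triangle. The generalized length of an edge joining vertices $u,v$ with horodisks $B_u,B_v$ is the distance between $B_u$ and $B_v$ if they are disjoint, and minus the distance between the two points $\partial B_u\cap e$, $\partial B_v\cap e$ otherwise. Every $(l_1,l_2,l_3)\in\mathbb{R}^3$ is realized by a unique decorated ideal triangle up to isometry, and the angles and lengths satisfy $\frac{e^{l_i}}{2}=\frac{2}{\theta_j\theta_k}$ for $\{i,j,k\}=\{1,2,3\}$. *)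

theory Defs
  imports "HOL-Analysis.Analysis"
begin

definition gen_angles :: "real^3 \<Rightarrow> real^3" where
  "gen_angles l = (THE \<theta>. (\<forall>i. \<theta> $ i > 0) \<and>
     (\<forall>i j k. i \<noteq> j \<and> j \<noteq> k \<and> i \<noteq> k \<longrightarrow>
        exp (l $ i) / 2 = 2 / (\<theta> $ j * \<theta> $ k)))"

text \<open>x_i = (theta_j + theta_k - theta_i)/2, where theta_j + theta_k is the sum
  over the two indices different from i.\<close>
definition xcoef :: "real^3 \<Rightarrow> real^3" where
  "xcoef l = (\<chi> i. ((\<Sum>m\<in>UNIV - {i}. gen_angles l $ m) - gen_angles l $ i) / 2)"

definition Wfun :: "real^3 \<Rightarrow> real" where
  "Wfun l = integral {0..1} (\<lambda>t. \<Sum>i\<in>UNIV. xcoef (t *\<^sub>R l) $ i * l $ i)"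

definition pd :: "3 \<Rightarrow> (real^3 \<Rightarrow> real) \<Rightarrow> real^3 \<Rightarrow> real" where
  "pd i f l = deriv (\<lambda>t. f (l + t *\<^sub>R axis i 1)) 0"

fun iter_pd :: "3 list \<Rightarrow> (real^3 \<Rightarrow> real) \<Rightarrow> real^3 \<Rightarrow> real" where
  "iter_pd [] f = f"
| "iter_pd (i # is) f = pd i (iter_pd is f)"

definition smooth3 :: "(real^3 \<Rightarrow> real) \<Rightarrow> bool" where
  "smooth3 f \<longleftrightarrow> (\<forall>is. continuous_on UNIV (iter_pd is f) \<and>
     (\<forall>i l. (\<lambda>t. iter_pd is f (l + t *\<^sub>R axis i 1)) differentiable (at 0)))"

definition strictly_concave_on :: "'a::real_vector set \<Rightarrow> ('a \<Rightarrow> real) \<Rightarrow> bool" where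
  "strictly_concave_on S f \<longleftrightarrow> convex S \<and>
     (\<forall>x\<in>S. \<forall>y\<in>S. \<forall>t. x \<noteq> y \<and> 0 < t \<and> t < 1 \<longrightarrow>
        f ((1 - t) *\<^sub>R x + t *\<^sub>R y) > (1 - t) * f x + t * f y)"

definition hessian3 :: "(real^3 \<Rightarrow> real) \<Rightarrow> real^3 \<Rightarrow> real^3^3" where
  "hessian3 f l = (\<chi> i j. pd i (pd j f) l)"

end

theory Submission
  imports Defs
begin

(* Write w_m for the linear form w_m(l) = (l_m - l_j - l_k)/2 ({m,j,k} = {1,2,3}) and
   a_m(l) = exp (w_m(l)).  Since w_j + w_k = -l_i, the triple theta = (2 a_1, 2 a_2, 2 a_3)
   satisfies exp(l_i)/2 = 2/(theta_j theta_k); a positive triple is determined by its pairwise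
   products, so these are exactly the generalized angles.  Consequently
     x_i = a_1 + a_2 + a_3 - 2 a_i   and   W = 6 - 2 (a_1 + a_2 + a_3),
   the latter because the right-hand side has gradient x and vanishes at 0 (fundamental theorem
   of calculus along the segment defining W).
   All these functions are finite sums of terms c * exp (w . l).  The Hessian of W is the quadratic
   form -2 * sum_m a_m (w_m . v)^2, manifestly symmetric (closedness of omega) and negative definite
   because the w_m have no common kernel; the same fact, combined with strict convexity of exp,
   yields strict concavity of W. *)

fun expsum :: "(real \<times> 'a::real_inner) list \<Rightarrow> 'a \<Rightarrow> real" where
  "expsum [] l = 0"
| "expsum ((c, w) # ps) l = c * exp (w \<bullet> l) + expsum ps l"

fun dexpsum :: "'a::real_inner \<Rightarrow> (real \<times> 'a) list \<Rightarrow> (real \<times> 'a) list" where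
  "dexpsum h [] = []"
| "dexpsum h ((c, w) # ps) = (c * (w \<bullet> h), w) # dexpsum h ps"

lemma expsum_has_derivative:
  "(expsum ps has_derivative (\<lambda>h. expsum (dexpsum h ps) l)) (at l)"
proof (induction ps)
  case (Cons p ps)
  obtain c w where p: "p = (c, w)" by fastforce
  have "((\<lambda>l. c * exp (w \<bullet> l)) has_derivative (\<lambda>h. c * (w \<bullet> h) * exp (w \<bullet> l))) (at l)"
    by (auto intro!: derivative_eq_intros simp: algebra_simps)
  from has_derivative_add[OF this Cons.IH] show ?case by (simp add: p)
qed simp

lemma dexpsum_scale: "expsum (dexpsum (s *\<^sub>R h) ps) l = s * expsum (dexpsum h ps) l"
  by (induction ps rule: dexpsum.induct) (simp_all add: algebra_simps)

lemma expsum_line_derivative: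
  "((\<lambda>t. expsum ps (l + t *\<^sub>R v)) has_real_derivative expsum (dexpsum v ps) (l + t *\<^sub>R v)) (at t)"
proof -
  have "((\<lambda>t. l + t *\<^sub>R v) has_derivative (\<lambda>s. s *\<^sub>R v)) (at t)"
    by (auto intro!: derivative_eq_intros)
  from has_derivative_compose[OF this expsum_has_derivative[of ps]]
  show ?thesis
    by (simp add: has_field_derivative_def dexpsum_scale mult.commute[of _ "expsum _ _"])
qed

lemma pd_expsum: "pd i (expsum ps) = expsum (dexpsum (axis i 1) ps)"
  unfolding pd_def using DERIV_imp_deriv[OF expsum_line_derivative[where t = 0]] by auto

lemma iter_pd_expsum: "\<exists>qs. iter_pd is (expsum ps) = expsum qs"
  by (induction "is") (auto simp: pd_expsum)

lemma continuous_on_expsum: "continuous_on UNIV (expsum ps)"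
proof (induction ps)
  case (Cons p ps)
  then show ?case by (cases p) (auto intro!: continuous_intros)
qed simp

lemma smooth3_expsum: "smooth3 (expsum ps)"
  unfolding smooth3_def
proof (intro allI conjI)
  fix "is" i l
  obtain qs where qs: "iter_pd is (expsum ps) = expsum qs"
    using iter_pd_expsum by blast
  show "continuous_on UNIV (iter_pd is (expsum ps))"
    using qs continuous_on_expsum by simp
  show "(\<lambda>t. iter_pd is (expsum ps) (l + t *\<^sub>R axis i 1)) differentiable (at 0)"
    using qs expsum_line_derivative real_differentiable_def by metis
qed

(* A triple of positive reals is determined by its three pairwise products,
   since theta_i^2 = (theta_i theta_j)(theta_i theta_k) / (theta_j theta_k). *)
lemma positive_triple_eq_from_products:
  fixes \<theta> \<phi> :: "real^3"
  assumes pos: "\<And>i. \<theta> $ i > 0" "\<And>i. \<phi> $ i > 0"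
    and prod: "\<And>i j k. i \<noteq> j \<Longrightarrow> j \<noteq> k \<Longrightarrow> i \<noteq> k \<Longrightarrow> \<theta> $ j * \<theta> $ k = \<phi> $ j * \<phi> $ k"
  shows "\<theta> = \<phi>"
proof -
  have "\<theta> $ i = \<phi> $ i" for i
  proof -
    obtain j k where jk: "i \<noteq> j" "j \<noteq> k" "i \<noteq> k"
      using exhaust_3[of i] that[of 2 3] that[of 1 3] that[of 1 2] by auto
    have "(\<theta> $ i)\<^sup>2 * (\<theta> $ j * \<theta> $ k) = (\<theta> $ i * \<theta> $ j) * (\<theta> $ i * \<theta> $ k)"
      by (simp add: power2_eq_square)
    also have "\<dots> = (\<phi> $ i)\<^sup>2 * (\<phi> $ j * \<phi> $ k)"
      using prod[of k i j] prod[of j i k] jk by (simp add: power2_eq_square mult.commute)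
    also have "\<dots> = (\<phi> $ i)\<^sup>2 * (\<theta> $ j * \<theta> $ k)"
      using prod[OF jk] by simp
    finally have "(\<theta> $ i)\<^sup>2 = (\<phi> $ i)\<^sup>2"
      using pos(1)[of j] pos(1)[of k] by simp
    then show ?thesis
      using pos(1)[of i] pos(2)[of i] by (simp add: power2_eq_iff)
  qed
  then show ?thesis by (simp add: vec_eq_iff)
qed

definition weight :: "3 \<Rightarrow> real^3" where
  "weight m = (\<chi> n. if n = m then 1/2 else -1/2)"

(* Half of the m-th generalized angle, as identified in gen_angles_eq below. *)
definition half_angle :: "3 \<Rightarrow> real^3 \<Rightarrow> real" where
  "half_angle m l = exp (weight m \<bullet> l)"

lemma half_angle_pos [simp]: "half_angle m l > 0"
  by (simp add: half_angle_def)

lemma weight_inner: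
  "weight 1 \<bullet> l = (l$1 - l$2 - l$3) / 2"
  "weight 2 \<bullet> l = (l$2 - l$1 - l$3) / 2"
  "weight 3 \<bullet> l = (l$3 - l$1 - l$2) / 2"
  by (simp_all add: weight_def inner_vec_def sum_3 field_simps)

lemma weight_pair_sum:
  assumes "i \<noteq> j" "j \<noteq> k" "i \<noteq> k"
  shows "weight j + weight k = - axis i 1"
proof -
  have "{i, j, k} = (UNIV :: 3 set)"
    by (rule card_subset_eq) (simp_all add: assms)
  then have "n = i \<or> n = j \<or> n = k" for n
    by blast
  then show ?thesis
    using assms by (auto simp: vec_eq_iff weight_def axis_def)
qed

lemma half_angle_product:
  assumes "i \<noteq> j" "j \<noteq> k" "i \<noteq> k"
  shows "half_angle j l * half_angle k l = exp (- l $ i)"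
proof -
  have "weight j \<bullet> l + weight k \<bullet> l = (weight j + weight k) \<bullet> l"
    by (simp add: inner_add_left)
  also have "\<dots> = - l $ i"
    by (simp add: weight_pair_sum[OF assms] inner_axis')
  finally have "weight j \<bullet> l + weight k \<bullet> l = - l $ i" .
  then show ?thesis by (simp add: half_angle_def exp_add[symmetric])
qed

lemma angle_condition_iff:
  fixes a p :: real
  assumes "p > 0"
  shows "exp a / 2 = 2 / p \<longleftrightarrow> p = 4 * exp (- a)"
  using assms by (auto simp: field_simps exp_minus)

lemma doubled_half_angle_product:
  assumes "i \<noteq> j" "j \<noteq> k" "i \<noteq> k"
  shows "(\<chi> m. 2 * half_angle m l) $ j * (\<chi> m. 2 * half_angle m l) $ k = 4 * exp (- l $ i)"
  using half_angle_product[of i j k l] assms by simp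

lemma gen_angles_eq: "gen_angles l = (\<chi> m. 2 * half_angle m l)"
  unfolding gen_angles_def
proof (rule the_equality)
  show "(\<forall>i. (\<chi> m. 2 * half_angle m l) $ i > 0) \<and>
     (\<forall>i j k. i \<noteq> j \<and> j \<noteq> k \<and> i \<noteq> k \<longrightarrow>
        exp (l $ i) / 2 = 2 / ((\<chi> m. 2 * half_angle m l) $ j * (\<chi> m. 2 * half_angle m l) $ k))"
  proof (intro conjI allI impI)
    fix i j k :: 3
    assume "i \<noteq> j \<and> j \<noteq> k \<and> i \<noteq> k"
    then have "(\<chi> m. 2 * half_angle m l) $ j * (\<chi> m. 2 * half_angle m l) $ k = 4 * exp (- l $ i)"
      using doubled_half_angle_product by blast
    moreover have pos: "(\<chi> m. 2 * half_angle m l) $ j * (\<chi> m. 2 * half_angle m l) $ k > 0"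
      by simp
    ultimately show "exp (l $ i) / 2 = 2 / ((\<chi> m. 2 * half_angle m l) $ j * (\<chi> m. 2 * half_angle m l) $ k)"
      using angle_condition_iff[OF pos] by blast
  qed simp
next
  fix \<theta> :: "real^3"
  assume \<theta>: "(\<forall>i. \<theta> $ i > 0) \<and>
     (\<forall>i j k. i \<noteq> j \<and> j \<noteq> k \<and> i \<noteq> k \<longrightarrow> exp (l $ i) / 2 = 2 / (\<theta> $ j * \<theta> $ k))"
  show "\<theta> = (\<chi> m. 2 * half_angle m l)"
  proof (rule positive_triple_eq_from_products)
    fix i j k :: 3
    assume ijk: "i \<noteq> j" "j \<noteq> k" "i \<noteq> k"
    have pos: "\<theta> $ j * \<theta> $ k > 0"
      using \<theta> by simp
    have "exp (l $ i) / 2 = 2 / (\<theta> $ j * \<theta> $ k)"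
      using \<theta> ijk by blast
    then have "\<theta> $ j * \<theta> $ k = 4 * exp (- l $ i)"
      using angle_condition_iff[OF pos] by blast
    then show "\<theta> $ j * \<theta> $ k = (\<chi> m. 2 * half_angle m l) $ j * (\<chi> m. 2 * half_angle m l) $ k"
      by (simp only: doubled_half_angle_product[OF ijk])
  qed (use \<theta> in blast, simp)
qed

lemma xcoef_eq: "xcoef l $ i = (\<Sum>m\<in>UNIV. half_angle m l) - 2 * half_angle i l"
  by (simp add: xcoef_def gen_angles_eq sum_diff1 sum_distrib_left[symmetric]; simp add: field_simps)

definition x_terms :: "3 \<Rightarrow> (real \<times> (real^3)) list" where
  "x_terms i = [(1, weight 1), (1, weight 2), (1, weight 3), (-2, weight i)]"

definition W_terms :: "(real \<times> (real^3)) list" where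
  "W_terms = [(6, 0), (-2, weight 1), (-2, weight 2), (-2, weight 3)]"

lemma xcoef_eq_expsum: "(\<lambda>l. xcoef l $ i) = expsum (x_terms i)"
  by (rule ext) (simp add: xcoef_eq sum_3 half_angle_def x_terms_def)

lemma expsum_W_terms: "expsum W_terms l = 6 - 2 * (\<Sum>m\<in>UNIV. half_angle m l)"
  by (simp add: W_terms_def sum_3 half_angle_def)

lemma gradient_W_terms: "expsum (dexpsum h W_terms) l = xcoef l \<bullet> h"
proof -
  have "xcoef l \<bullet> h = xcoef l $ 1 * h $ 1 + xcoef l $ 2 * h $ 2 + xcoef l $ 3 * h $ 3"
    by (simp add: inner_vec_def sum_3)
  then show ?thesis
    by (simp add: W_terms_def xcoef_eq sum_3 half_angle_def[symmetric] weight_inner[of h] field_simps)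
qed

lemma Wfun_eq_expsum: "Wfun = expsum W_terms"
proof
  fix l :: "real^3"
  have "((\<lambda>t. expsum W_terms (0 + t *\<^sub>R l)) has_real_derivative
      (\<Sum>i\<in>UNIV. xcoef (t *\<^sub>R l) $ i * l $ i)) (at t within {0..1})" for t
    using expsum_line_derivative[of W_terms 0 l t]
    by (simp add: gradient_W_terms inner_vec_def mult.commute has_field_derivative_at_within)
  then have "((\<lambda>t. \<Sum>i\<in>UNIV. xcoef (t *\<^sub>R l) $ i * l $ i) has_integral
      (expsum W_terms l - expsum W_terms 0)) {0..1}"
    using fundamental_theorem_of_calculus[of 0 1 "\<lambda>t. expsum W_terms (0 + t *\<^sub>R l)"]
    by (simp add: has_real_derivative_iff_has_vector_derivative)
  moreover have "expsum W_terms 0 = 0"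
    by (simp add: W_terms_def)
  ultimately show "Wfun l = expsum W_terms l"
    unfolding Wfun_def by (simp add: integral_unique)
qed

(* The Jacobian of x in symmetric form; it is the Hessian of W. *)
lemma pd_xcoef:
  "pd j (\<lambda>l. xcoef l $ i) l = -2 * (\<Sum>m\<in>UNIV. half_angle m l * weight m $ i * weight m $ j)"
  unfolding xcoef_eq_expsum pd_expsum
  using exhaust_3[of i] exhaust_3[of j]
  by (auto simp: x_terms_def inner_axis sum_3 half_angle_def weight_def)

lemma hessian_quadratic_form:
  "v \<bullet> (hessian3 Wfun l *v v) = -2 * (\<Sum>m\<in>UNIV. half_angle m l * (weight m \<bullet> v)\<^sup>2)"
proof -
  define F where "F m i j = -2 * (half_angle m l * (weight m $ i * v $ i) * (weight m $ j * v $ j))"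
    for m i j :: 3
  have pd_Wfun: "pd j Wfun = (\<lambda>l. xcoef l $ j)" for j
    by (simp add: fun_eq_iff Wfun_eq_expsum pd_expsum gradient_W_terms inner_axis)
  have "v \<bullet> (hessian3 Wfun l *v v) = (\<Sum>i\<in>UNIV. \<Sum>j\<in>UNIV. \<Sum>m\<in>UNIV. F m i j)"
    by (simp add: inner_vec_def matrix_vector_mult_def hessian3_def pd_Wfun pd_xcoef F_def
        sum_distrib_left sum_distrib_right mult_ac)
  also have "\<dots> = (\<Sum>i\<in>UNIV. \<Sum>m\<in>UNIV. \<Sum>j\<in>UNIV. F m i j)"
    by (rule sum.cong[OF refl], rule sum.swap)
  also have "\<dots> = (\<Sum>m\<in>UNIV. \<Sum>i\<in>UNIV. \<Sum>j\<in>UNIV. F m i j)"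
    by (rule sum.swap)
  also have "\<dots> = -2 * (\<Sum>m\<in>UNIV. half_angle m l * (weight m \<bullet> v)\<^sup>2)"
    by (simp add: F_def inner_vec_def power2_eq_square sum_distrib_left sum_product mult_ac)
  finally show ?thesis .
qed

lemma weights_separate:
  assumes "\<And>m. weight m \<bullet> v = 0"
  shows "v = 0"
  using assms[of 1] assms[of 2] assms[of 3]
  by (simp add: vec_eq_iff forall_3 weight_inner)

lemma exp_gt_one_plus: "x \<noteq> 0 \<Longrightarrow> 1 + x < exp (x::real)"
proof (cases "x \<le> -1")
  case False
  assume "x \<noteq> 0"
  have "(1 + x/2) * (1 + x/2) \<le> exp (x/2) * exp (x/2)"
    using False by (intro mult_mono) (simp_all add: exp_ge_add_one_self[of "x/2", simplified])
  also have "\<dots> = exp x"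
    by (simp add: exp_add[symmetric])
  finally have "1 + x + x * x / 4 \<le> exp x"
    by (simp add: algebra_simps)
  moreover have "x * x > 0"
    using \<open>x \<noteq> 0\<close> not_real_square_gt_zero by blast
  ultimately show ?thesis by linarith
qed (use exp_gt_zero[of x] in linarith)

lemma exp_above_tangent:
  fixes x m :: real
  assumes "x \<noteq> m"
  shows "exp m * (1 + (x - m)) < exp x"
proof -
  have "exp m * (1 + (x - m)) < exp m * exp (x - m)"
    using assms exp_gt_one_plus[of "x - m"] by simp
  then show ?thesis
    by (simp add: exp_diff)
qed

lemma exp_strictly_convex:
  fixes p q t :: real
  assumes "p \<noteq> q" "0 < t" "t < 1"
  shows "exp ((1 - t) * p + t * q) < (1 - t) * exp p + t * exp q"
proof -
  define m where "m = (1 - t) * p + t * q"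
  have "p - m = t * (p - q)" "q - m = (1 - t) * (q - p)"
    by (simp_all add: m_def algebra_simps)
  then have "p \<noteq> m" "q \<noteq> m"
    using assms by auto
  then have "exp m * (1 + (p - m)) < exp p" "exp m * (1 + (q - m)) < exp q"
    by (simp_all add: exp_above_tangent)
  then have "(1 - t) * (exp m * (1 + (p - m))) + t * (exp m * (1 + (q - m))) <
      (1 - t) * exp p + t * exp q"
    using assms by (intro add_strict_mono mult_strict_left_mono) auto
  moreover have "(1 - t) * (exp m * (1 + (p - m))) + t * (exp m * (1 + (q - m))) = exp m"
    by (simp add: m_def algebra_simps)
  ultimately show ?thesis by (simp add: m_def)
qed

lemma sum_exp_linear_strictly_convex:
  fixes w :: "'i \<Rightarrow> 'a::real_inner" and x y :: 'a
  assumes "finite I"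
    and separating: "\<And>v. (\<And>m. m \<in> I \<Longrightarrow> w m \<bullet> v = 0) \<Longrightarrow> v = 0"
    and "x \<noteq> y" "0 < t" "t < 1"
  shows "(\<Sum>m\<in>I. exp (w m \<bullet> ((1 - t) *\<^sub>R x + t *\<^sub>R y))) <
    (1 - t) * (\<Sum>m\<in>I. exp (w m \<bullet> x)) + t * (\<Sum>m\<in>I. exp (w m \<bullet> y))"
proof -
  have lin: "w m \<bullet> ((1 - t) *\<^sub>R x + t *\<^sub>R y) = (1 - t) * (w m \<bullet> x) + t * (w m \<bullet> y)" for m
    by (simp add: inner_add_right)
  obtain m0 where "m0 \<in> I" "w m0 \<bullet> x \<noteq> w m0 \<bullet> y"
    using separating[of "x - y"] \<open>x \<noteq> y\<close> by (auto simp: inner_diff_right)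
  then have "\<exists>m\<in>I. exp (w m \<bullet> ((1 - t) *\<^sub>R x + t *\<^sub>R y)) <
      (1 - t) * exp (w m \<bullet> x) + t * exp (w m \<bullet> y)"
    using exp_strictly_convex assms lin by metis
  moreover have "exp (w m \<bullet> ((1 - t) *\<^sub>R x + t *\<^sub>R y)) \<le>
      (1 - t) * exp (w m \<bullet> x) + t * exp (w m \<bullet> y)" for m
    using exp_strictly_convex[of "w m \<bullet> x" "w m \<bullet> y" t] assms
    by (cases "w m \<bullet> x = w m \<bullet> y") (simp_all add: lin algebra_simps)
  ultimately have "(\<Sum>m\<in>I. exp (w m \<bullet> ((1 - t) *\<^sub>R x + t *\<^sub>R y))) <
      (\<Sum>m\<in>I. (1 - t) * exp (w m \<bullet> x) + t * exp (w m \<bullet> y))"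
    using \<open>finite I\<close> by (intro sum_strict_mono_ex1) auto
  then show ?thesis
    by (simp add: sum.distrib sum_distrib_left)
qed

lemma strictly_concave_Wfun: "strictly_concave_on UNIV Wfun"
  unfolding strictly_concave_on_def
proof (intro conjI ballI allI impI)
  fix x y :: "real^3" and t :: real
  assume "x \<noteq> y \<and> 0 < t \<and> t < 1"
  then have "(\<Sum>m\<in>UNIV. half_angle m ((1 - t) *\<^sub>R x + t *\<^sub>R y)) <
      (1 - t) * (\<Sum>m\<in>UNIV. half_angle m x) + t * (\<Sum>m\<in>UNIV. half_angle m y)"
    unfolding half_angle_def
    by (intro sum_exp_linear_strictly_convex) (auto intro: weights_separate)
  then show "Wfun ((1 - t) *\<^sub>R x + t *\<^sub>R y) > (1 - t) * Wfun x + t * Wfun y"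
    by (simp add: Wfun_eq_expsum expsum_W_terms algebra_simps)
qed simp

lemma hessian_Wfun_negative_definite:
  assumes "v \<noteq> 0"
  shows "v \<bullet> (hessian3 Wfun l *v v) < 0"
proof -
  obtain m0 where "weight m0 \<bullet> v \<noteq> 0"
    using weights_separate assms by blast
  then have "0 < (\<Sum>m\<in>UNIV. half_angle m l * (weight m \<bullet> v)\<^sup>2)"
    by (intro sum_pos2[of UNIV m0]) (auto simp: zero_le_mult_iff half_angle_pos[THEN less_imp_le])
  then show ?thesis
    by (simp add: hessian_quadratic_form)
qed

lemma Wfun_has_derivative: "(Wfun has_derivative (\<lambda>h. xcoef l \<bullet> h)) (at l)"
  using expsum_has_derivative[of W_terms l] by (simp add: Wfun_eq_expsum gradient_W_terms)

lemma pd_Wfun: "pd i Wfun l = xcoef l $ i"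
  by (simp add: Wfun_eq_expsum pd_expsum gradient_W_terms inner_axis)

theorem lemma2p3:
  shows "(\<forall>i. smooth3 (\<lambda>l. xcoef l $ i))
    \<and> (\<forall>i j l. pd j (\<lambda>l'. xcoef l' $ i) l = pd i (\<lambda>l'. xcoef l' $ j) l)
    \<and> smooth3 Wfun
    \<and> strictly_concave_on UNIV Wfun
    \<and> (\<forall>l v. v \<noteq> 0 \<longrightarrow> v \<bullet> (hessian3 Wfun l *v v) < 0)
    \<and> (\<forall>l. (Wfun has_derivative (\<lambda>h. xcoef l \<bullet> h)) (at l))
    \<and> (\<forall>i l. pd i Wfun l = xcoef l $ i)"
proof -
  have "smooth3 (\<lambda>l. xcoef l $ i)" for i
    by (simp add: xcoef_eq_expsum smooth3_expsum)
  moreover have "pd j (\<lambda>l'. xcoef l' $ i) l = pd i (\<lambda>l'. xcoef l' $ j) l" for i j l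
    by (simp add: pd_xcoef mult_ac)
  moreover have "smooth3 Wfun"
    by (simp add: Wfun_eq_expsum smooth3_expsum)
  ultimately show ?thesis
    using strictly_concave_Wfun hessian_Wfun_negative_definite Wfun_has_derivative pd_Wfun
    by blast
qed

end
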